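(* Let $F(x)=\sum_{n\ge0}t^n\sum_{(P,Q)\in\mathcal{I}_n}x^{\mathrm{contact}(P)}$ and $$J(x,y)\equiv J(t,x,y,r,s)=\sum_{n\ge0}t^n\sum_{(P,Q)\in\mathcal{I}_n}\sum_{j=1}^nr^{\tilde P(j)}s^{\tilde Q(j)}x^{\mathrm{contact}'_{\le j}(P)}y^{\mathrm{contact}'_{> j}(P)}.$$ Then $$J(x,y)=x\frac{F(y)-y}{y}+rstx\frac{J(1,y)-J(1,1)}{y-1}F(y)+stx^2\frac{J(x,y)-J(1,y)}{(x-1)y}F(y)+xtJ(x,y)\frac{F(x)-F(1)}{x-1}.$$
   Context: A Dyck path of size $n$ is a lattice path from $(0,0)$ to $(2n,0)$ with $n$ up-steps $(1,1)$ and $n$ down-steps $(1,-1)$ never going below height $0$. For $j\in\{1,\dots,n\}$, $\tilde P(j)$ is the height of the initial point of the $j$-th up-step of $P$. A contact is a vertex of the path on the $x$-axis (including both endpoints); $\mathrm{contact}(P)$ is their number; $\mathrm{contact}'_{\le j}(P)$ is the number of contacts of $P$ whose abscissa is at most the initial abscissa of the $j$-th up-step of $P$, and $\mathrm{contact}'_{>j}(P)$ the number of contacts with abscissa strictly larger than it. The Tamari order is the reflexive transitive closure of the relation: if $P$ has a down-step $d$ immediately followed by an up-step and $\mathfrak{e}$ is the shortest excursion following $d$ (staying strictly above its starting height except at its last point), the path obtained by exchanging $d$ and $\mathfrak{e}$ is larger than $P$. $\mathcal{I}_n$ is the set of pairs $(P,Q)$ of Dyck paths of size $n$ with $P\le Q$.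 *)

theory Defs
  imports "HOL-Computational_Algebra.Formal_Power_Series"
begin

text \<open>Dyck paths are bool lists: True = up-step (1,1), False = down-step (1,-1).\<close>

definition stp :: "bool \<Rightarrow> int" where
  "stp b = (if b then 1 else -1)"

definition height :: "bool list \<Rightarrow> nat \<Rightarrow> int" where
  "height P k = sum_list (map stp (take k P))"

definition dyck :: "nat \<Rightarrow> bool list \<Rightarrow> bool" where
  "dyck n P \<longleftrightarrow> length P = 2 * n \<and> length (filter id P) = n
     \<and> (\<forall>k \<le> length P. height P k \<ge> 0)"

text \<open>Abscissa of the initial point of the j-th up-step (j counted from 1).\<close>
definition upstart :: "bool list \<Rightarrow> nat \<Rightarrow> nat" where
  "upstart P j = filter (\<lambda>i. P ! i) [0..<length P] ! (j - 1)"

definition Ptilde :: "bool list \<Rightarrow> nat \<Rightarrow> int" where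
  "Ptilde P j = height P (upstart P j)"

definition contacts :: "bool list \<Rightarrow> nat set" where
  "contacts P = {k. k \<le> length P \<and> height P k = 0}"

definition contact :: "bool list \<Rightarrow> nat" where
  "contact P = card (contacts P)"

definition contact_le :: "bool list \<Rightarrow> nat \<Rightarrow> nat" where
  "contact_le P j = card {k \<in> contacts P. k \<le> upstart P j}"

definition contact_gt :: "bool list \<Rightarrow> nat \<Rightarrow> nat" where
  "contact_gt P j = card {k \<in> contacts P. k > upstart P j}"

text \<open>Elementary Tamari move: the down-step at position i (steps indexed from 0) is
  followed by an up-step; the shortest excursion following it occupies steps i+1 .. m-1
  (from vertex i+1 to vertex m); exchange the down-step and the excursion.\<close>
definition tamari_step :: "bool list \<Rightarrow> bool list \<Rightarrow> bool" where
  "tamari_step P Q \<longleftrightarrow> (\<exists>i m. i + 1 < length P \<and> \<not> P ! i \<and> P ! (i + 1)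
     \<and> i + 1 < m \<and> m \<le> length P
     \<and> height P m = height P (i + 1)
     \<and> (\<forall>k. i + 1 < k \<and> k < m \<longrightarrow> height P k > height P (i + 1))
     \<and> Q = take i P @ take (m - (i + 1)) (drop (i + 1) P) @ [False] @ drop m P)"

definition tamari_le :: "bool list \<Rightarrow> bool list \<Rightarrow> bool" where
  "tamari_le = tamari_step\<^sup>*\<^sup>*"

definition intervals :: "nat \<Rightarrow> (bool list \<times> bool list) set" where
  "intervals n = {(P, Q). dyck n P \<and> dyck n Q \<and> tamari_le P Q}"

text \<open>Generating functions in t, with the catalytic/auxiliary variables specialised to
  field elements.\<close>
definition Fgf :: "'a::field \<Rightarrow> 'a fps" where
  "Fgf x = Abs_fps (\<lambda>n. \<Sum>(P, Q) \<in> intervals n. x ^ contact P)"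

definition Jgf :: "'a::field \<Rightarrow> 'a \<Rightarrow> 'a \<Rightarrow> 'a \<Rightarrow> 'a fps" where
  "Jgf x y r s = Abs_fps (\<lambda>n. \<Sum>(P, Q) \<in> intervals n. \<Sum>j = 1..n.
      r ^ nat (Ptilde P j) * s ^ nat (Ptilde Q j) * x ^ contact_le P j * y ^ contact_gt P j)"

end

theory Submission
  imports Defs
begin

text \<open>Cutting both paths at their first returns decomposes every interval of size \<open>n + 1\<close>
  uniquely as \<open>(U X D Y P2, U Q1 D Q2)\<close>, where \<open>(X Y, Q1)\<close> and \<open>(P2, Q2)\<close> are
  intervals and \<open>|X|\<close> is a contact of \<open>X Y\<close>. The first up-step of the glued interval has
  weight \<open>x y^(contact - 1)\<close>, giving \<open>x (F(y) - y) / y\<close>. An up-step of \<open>X\<close> is lifted in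
  both paths (factor \<open>r s\<close>), has only the origin as contact to its left, and sees the contacts
  of \<open>Y\<close> and \<open>P2\<close> to its right; an up-step of \<open>Y\<close> is lifted in the upper path only and
  gains the contacts between \<open>|X|\<close> and itself on its left; an up-step of \<open>P2\<close> gains the
  contacts of \<open>X Y\<close> from \<open>|X|\<close> on. Summing over the contact \<open>|X|\<close> turns these exponents
  into geometric series, i.e. into the divided differences in \<open>x\<close> and \<open>y\<close> of the remaining
  three terms.\<close>

lemma append_Cons_eq_longer:
  "v @ c # u = v' @ w \<Longrightarrow> length v < length v' \<Longrightarrow> \<exists>m. v' = v @ c # m"
  by (auto simp: append_eq_append_conv2 Cons_eq_append_conv)

lemma append_eq_append_split3:
  assumes "L @ R = A @ M @ B"
  shows "(\<exists>A'. A = L @ A' \<and> R = A' @ M @ B) \<or> (\<exists>B'. B = B' @ R \<and> L = A @ M @ B')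
    \<or> (\<exists>D D'. L = A @ D \<and> M = D @ D' \<and> D \<noteq> [] \<and> D' \<noteq> [] \<and> R = D' @ B)"
proof -
  consider A' where "A = L @ A'" "R = A' @ M @ B" | U where "L = A @ U" "U @ R = M @ B"
    using assms by (auto simp: append_eq_append_conv2)
  then show ?thesis
  proof cases
    case (2 U)
    consider B' where "U = M @ B'" "B = B' @ R" | D' where "M = U @ D'" "R = D' @ B"
      using 2(2) by (auto simp: append_eq_append_conv2)
    then show ?thesis
    proof cases
      case (2 D')
      then show ?thesis using \<open>L = A @ U\<close> by (cases "U = []"; cases "D' = []") auto
    qed (use 2 in auto)
  qed auto
qed

lemma bij_betw_rank:
  fixes T :: "nat set"
  assumes "finite T"
  shows "bij_betw (\<lambda>k. card {c \<in> T. k \<le> c}) T {1..card T}"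
proof (rule bij_betw_imageI)
  let ?rank = "\<lambda>k. card {c \<in> T. k \<le> c}"
  have less: "?rank b < ?rank a" if "a \<in> T" "a < b" for a b
  proof -
    have "{c \<in> T. b \<le> c} \<subseteq> {c \<in> T. a \<le> c}" "a \<in> {c \<in> T. a \<le> c} - {c \<in> T. b \<le> c}"
      using that by auto
    then have "{c \<in> T. b \<le> c} \<subset> {c \<in> T. a \<le> c}" by blast
    then show ?thesis using assms by (intro psubset_card_mono) auto
  qed
  show "inj_on ?rank T"
    by (rule inj_onI) (metis less linorder_neqE_nat less_irrefl)
  have "?rank ` T \<subseteq> {1..card T}"
    using assms by (auto simp: Suc_le_eq card_gt_0_iff intro: card_mono)
  moreover have "card (?rank ` T) = card {1..card T}"
    using card_image[OF \<open>inj_on ?rank T\<close>] by simp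
  ultimately show "?rank ` T = {1..card T}" by (intro card_subset_eq) auto
qed

lemma sum_rank: "finite (T :: nat set) \<Longrightarrow> (\<Sum>k\<in>T. f (card {c \<in> T. k \<le> c})) = (\<Sum>i=1..card T. f i)"
  using sum.reindex_bij_betw[OF bij_betw_rank, of T f] by simp

lemma sum_rank_above:
  assumes "finite (S :: nat set)"
  shows "(\<Sum>k\<in>{k \<in> S. u < k}. f (card {c \<in> S. k \<le> c})) = (\<Sum>i=1..card {c \<in> S. u < c}. f i)"
proof -
  have "(\<Sum>k\<in>{k \<in> S. u < k}. f (card {c \<in> S. k \<le> c}))
      = (\<Sum>k\<in>{k \<in> S. u < k}. f (card {c \<in> {k \<in> S. u < k}. k \<le> c}))"
    by (intro sum.cong refl arg_cong[where f = f] arg_cong[where f = card]) auto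
  then show ?thesis using sum_rank[of "{k \<in> S. u < k}" f] assms by simp
qed

lemma sum_rank_upto:
  assumes "finite (S :: nat set)"
  shows "(\<Sum>k\<in>{k \<in> S. k \<le> u}. f (card {c \<in> S. k \<le> c \<and> c \<le> u})) = (\<Sum>i=1..card {c \<in> S. c \<le> u}. f i)"
proof -
  have "(\<Sum>k\<in>{k \<in> S. k \<le> u}. f (card {c \<in> S. k \<le> c \<and> c \<le> u}))
      = (\<Sum>k\<in>{k \<in> S. k \<le> u}. f (card {c \<in> {k \<in> S. k \<le> u}. k \<le> c}))"
    by (intro sum.cong refl arg_cong[where f = f] arg_cong[where f = card]) auto
  then show ?thesis using sum_rank[of "{k \<in> S. k \<le> u}" f] assms by simp
qed

lemma sum_split_range:
  "(\<Sum>j=2..Suc (n1 + n2). g j) = (\<Sum>j=1..n1. g (Suc j)) + (\<Sum>j=1..n2. g (Suc n1 + j))"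
proof -
  have "(\<Sum>j=2..Suc n1 + n2. g j) = (\<Sum>j=2..Suc n1. g j) + (\<Sum>j=Suc n1 + 1..Suc n1 + n2. g j)"
    by (rule sum.ub_add_nat) simp
  moreover have "(\<Sum>j=2..Suc n1. g j) = (\<Sum>j=1..n1. g (Suc j))"
    using sum.shift_bounds_cl_Suc_ivl[of g 1 n1] by (simp add: numeral_2_eq_2)
  moreover have "(\<Sum>j=Suc n1 + 1..Suc n1 + n2. g j) = (\<Sum>j=1..n2. g (Suc n1 + j))"
    using sum.shift_bounds_cl_nat_ivl[of g 1 "Suc n1" n2] by (simp add: add.commute)
  ultimately show ?thesis by simp
qed

lemma scaled_sum_product_nested:
  fixes a :: "'a::comm_ring_1"
  shows "a * ((\<Sum>p\<in>A. \<Sum>j\<in>J p. f p j) * (\<Sum>q\<in>B. g q)) = (\<Sum>p\<in>A. \<Sum>q\<in>B. \<Sum>j\<in>J p. a * f p j * g q)"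
  by (simp add: sum_product sum_distrib_left sum_distrib_right mult_ac sum.swap[of _ "J _"])

lemma scaled_sum_product_nested_swap:
  fixes a :: "'a::comm_ring_1"
  shows "a * ((\<Sum>q\<in>B. \<Sum>j\<in>J. g q j) * (\<Sum>p\<in>A. f p)) = (\<Sum>p\<in>A. \<Sum>q\<in>B. \<Sum>j\<in>J. a * g q j * f p)"
  by (simp add: sum_product sum_distrib_left sum_distrib_right mult_ac sum.swap[of _ A])

lemma fps_nth_const_X_mult:
  fixes c :: "'a::comm_ring_1"
  shows "fps_nth (fps_const c * fps_X * A * B) n
    = (if n = 0 then 0 else c * (\<Sum>i\<le>n - 1. fps_nth A i * fps_nth B (n - 1 - i)))"
proof -
  have "fps_const c * fps_X * A * B = fps_const c * (fps_X * (A * B))" by (simp add: mult_ac)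
  then have "fps_nth (fps_const c * fps_X * A * B) n = c * fps_nth (fps_X * (A * B)) n"
    by (simp only: fps_mult_left_const_nth)
  then show ?thesis by (simp only: fps_X_mult_nth) (simp add: fps_mult_nth atLeast0AtMost)
qed

section \<open>Heights and balanced words\<close>

definition final_height :: "bool list \<Rightarrow> int" where
  "final_height w = sum_list (map stp w)"

definition balanced :: "bool list \<Rightarrow> bool" where
  "balanced w \<longleftrightarrow> final_height w = 0 \<and> (\<forall>k. 0 \<le> height w k)"

lemma stp_simps [simp]: "stp True = 1" "stp False = -1"
  by (simp_all add: stp_def)

lemma final_height_simps [simp]:
  "final_height [] = 0"
  "final_height (b # w) = stp b + final_height w"
  "final_height (v @ w) = final_height v + final_height w"
  by (simp_all add: final_height_def)

lemma final_height_count: "final_height w = 2 * int (length (filter id w)) - int (length w)"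
  by (induction w) (auto simp: stp_def)

lemma height_eq_final_height_take: "height w k = final_height (take k w)"
  by (simp add: height_def final_height_def)

lemma height_0 [simp]: "height w 0 = 0"
  by (simp add: height_eq_final_height_take)

lemma height_Cons: "height (b # w) k = (if k = 0 then 0 else stp b + height w (k - 1))"
  by (cases k) (simp_all add: height_eq_final_height_take)

lemma height_append:
  "height (v @ w) k = (if k \<le> length v then height v k else final_height v + height w (k - length v))"
  by (simp add: height_eq_final_height_take)

lemma height_beyond: "length w \<le> k \<Longrightarrow> height w k = final_height w"
  by (simp add: height_eq_final_height_take)

lemma height_append_length: "height (v @ w) (length v + k) = final_height v + height w k"
  by (cases "k = 0") (simp_all add: height_append height_beyond)

lemma height_append_ge: "length v \<le> k \<Longrightarrow> height (v @ w) k = final_height v + height w (k - length v)"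
  using height_append_length[of v w "k - length v"] by simp

lemma height_add_drop: "a \<le> length w \<Longrightarrow> height w (a + k) = height w a + height (drop a w) k"
  using height_append_length[of "take a w" "drop a w" k] by (simp add: height_eq_final_height_take)

lemma height_elevated_inside:
  "k \<le> length v \<Longrightarrow> height (True # v @ False # w) (Suc k) = 1 + height v k"
  by (simp add: height_Cons height_append)

lemma height_elevated_after:
  "height (True # v @ False # w) (length v + 2 + k) = final_height v + height w k"
  using height_append_length[of "True # v @ [False]" w k] by (simp add: add.commute)

lemma balanced_height_nonneg: "balanced w \<Longrightarrow> 0 \<le> height w k"
  by (simp add: balanced_def)

lemma balanced_Nil [simp]: "balanced []"
  by (simp add: balanced_def height_eq_final_height_take)

lemma balanced_append: "balanced v \<Longrightarrow> balanced w \<Longrightarrow> balanced (v @ w)"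
  by (simp add: balanced_def height_append)

lemma balanced_appendD1: "balanced (v @ w) \<Longrightarrow> final_height v = 0 \<Longrightarrow> balanced v"
  unfolding balanced_def
  by (metis height_append height_beyond nle_le)

lemma balanced_appendD2: "balanced (v @ w) \<Longrightarrow> balanced v \<Longrightarrow> balanced w"
  unfolding balanced_def
  by (metis add.left_neutral add_diff_cancel_left' final_height_simps(3) height_append_length)

lemma balanced_elevate: "balanced v \<Longrightarrow> balanced (True # v @ [False])"
  unfolding balanced_def
  by (auto simp: height_Cons height_append height_beyond add_nonneg_nonneg)

lemma balanced_length: "balanced w \<Longrightarrow> length w = 2 * length (filter id w)"
  using final_height_count[of w] by (simp add: balanced_def)

lemma dyck_iff_balanced: "dyck n w \<longleftrightarrow> balanced w \<and> length w = 2 * n"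
  using final_height_count[of w]
  by (auto simp: dyck_def balanced_def height_beyond intro: le_cases[of _ "length w"])

lemma balanced_hd: "balanced (b # w) \<Longrightarrow> b"
  using balanced_height_nonneg[of "b # w" 1] by (cases b) (simp_all add: height_Cons)

lemma balanced_down_step: "balanced (v @ False # w) \<Longrightarrow> 1 \<le> final_height v"
  using balanced_height_nonneg[of "v @ False # w" "length v + 1"]
    height_append_length[of v "False # w" 1]
  by (simp add: height_Cons)

lemma balanced_take_contact:
  "balanced w \<Longrightarrow> k \<in> contacts w \<Longrightarrow> balanced (take k w) \<and> balanced (drop k w)"
  using balanced_appendD1[of "take k w" "drop k w"] balanced_appendD2[of "take k w" "drop k w"]
  by (simp add: contacts_def height_eq_final_height_take)

lemma first_passage_below:
  fixes d :: int
  assumes "final_height w < - d" "0 \<le> d"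
  shows "\<exists>v u. w = v @ False # u \<and> final_height v = - d \<and> (\<forall>k. - d \<le> height v k)"
  using assms
proof (induction w arbitrary: d)
  case (Cons b w)
  show ?case
  proof (cases "b \<or> d \<noteq> 0")
    case True
    define d' where "d' = (if b then d + 1 else d - 1)"
    have "final_height w < - d'" "0 \<le> d'" using Cons.prems True by (auto simp: d'_def)
    then obtain v u where vu: "w = v @ False # u" "final_height v = - d'" "\<And>k. - d' \<le> height v k"
      using Cons.IH by blast
    have "- d \<le> height (b # v) k" for k
      using vu(3)[of "k - 1"] Cons.prems(2) by (cases b) (auto simp: height_Cons d'_def)
    then show ?thesis using vu by (rule_tac exI[of _ "b # v"], rule_tac exI[of _ u]) (auto simp: d'_def)
  next
    case False
    then show ?thesis
      by (rule_tac exI[of _ "[]"], rule_tac exI[of _ w]) (simp add: height_eq_final_height_take)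
  qed
qed simp

lemma balanced_first_return:
  assumes "balanced w" "w \<noteq> []"
  shows "\<exists>v u. w = True # v @ False # u \<and> balanced v \<and> balanced u"
proof -
  obtain w' where w: "w = True # w'"
    using assms balanced_hd by (cases w) auto
  then have "final_height w' < - 0" using assms(1) by (simp add: balanced_def)
  then obtain v u where vu: "w' = v @ False # u" "final_height v = 0" "\<And>k. 0 \<le> height v k"
    using first_passage_below by fastforce
  then have "balanced v" by (simp add: balanced_def)
  moreover have "balanced u"
    using balanced_appendD2[of "True # v @ [False]" u] assms(1) balanced_elevate[OF \<open>balanced v\<close>] w vu
    by simp
  ultimately show ?thesis unfolding w vu(1) by blast
qed

lemma first_return_unique:
  assumes "True # v @ False # u = True # v' @ False # u'" "balanced v" "balanced v'"
  shows "v = v' \<and> u = u'"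
proof -
  have eq: "v @ False # u = v' @ False # u'" using assms(1) by simp
  have "\<not> length v < length v'" "\<not> length v' < length v"
    using append_Cons_eq_longer[OF eq] append_Cons_eq_longer[OF eq[symmetric]]
      balanced_down_step assms(2,3) by (metis balanced_def not_one_le_zero)+
  then show ?thesis using eq by (simp add: append_eq_append_conv)
qed

section \<open>The Tamari order as rewriting of words\<close>

definition tamari_move :: "bool list \<Rightarrow> bool list \<Rightarrow> bool" where
  "tamari_move P Q \<longleftrightarrow> (\<exists>A e B. balanced e
     \<and> P = A @ [False] @ (True # e @ [False]) @ B \<and> Q = A @ (True # e @ [False]) @ [False] @ B)"

abbreviation tamari_leq :: "bool list \<Rightarrow> bool list \<Rightarrow> bool" (infix "\<preceq>" 50) where
  "P \<preceq> Q \<equiv> tamari_move\<^sup>*\<^sup>* P Q"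

lemma excursion_prefix:
  assumes "L \<le> length D" "0 < L" "height D L = 0" "\<And>t. 0 < t \<Longrightarrow> t < L \<Longrightarrow> 0 < height D t"
  shows "\<exists>e. take L D = True # e @ [False] \<and> balanced e"
proof -
  let ?W = "take L D"
  have height_W: "height ?W t = height D (min t L)" for t
    by (simp add: height_eq_final_height_take min.commute)
  have "0 \<le> height ?W t" for t
    unfolding height_W using assms(3) assms(4)[of "min t L"]
    by (cases "t = 0 \<or> L \<le> t") (auto simp: min_def)
  then have "balanced ?W"
    using height_W[of L] assms(1,3) by (simp add: balanced_def height_beyond)
  moreover have "?W \<noteq> []" using assms(1,2) by auto
  ultimately obtain v u where W: "?W = True # v @ False # u" "balanced v" "balanced u"
    using balanced_first_return by blast
  have "u = []"
  proof (rule ccontr)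
    assume "u \<noteq> []"
    then have "length v + 2 < L" using arg_cong[OF W(1), of length] assms(1) by auto
    moreover have "height ?W (length v + 2 + 0) = 0"
      unfolding W(1) height_elevated_after using W(2) by (simp add: balanced_def)
    ultimately show False using assms(4)[of "length v + 2"] height_W by simp
  qed
  then show ?thesis using W by blast
qed

lemma tamari_step_imp_move:
  assumes "tamari_step P Q"
  shows "tamari_move P Q"
proof -
  obtain i m where im: "i + 1 < length P" "\<not> P ! i" "i + 1 < m" "m \<le> length P"
     "height P m = height P (i + 1)"
     "\<And>k. i + 1 < k \<Longrightarrow> k < m \<Longrightarrow> height P k > height P (i + 1)"
    and Q: "Q = take i P @ take (m - (i + 1)) (drop (i + 1) P) @ [False] @ drop m P"
    using assms unfolding tamari_step_def by blast
  define D where "D = drop (i + 1) P"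
  define L where "L = m - (i + 1)"
  have height_D: "height P (i + 1 + t) = height P (i + 1) + height D t" for t
    unfolding D_def using height_add_drop[of "i + 1" P t] im(1) by simp
  have "\<exists>e. take L D = True # e @ [False] \<and> balanced e"
  proof (rule excursion_prefix)
    show "height D L = 0" using height_D[of L] im by (simp add: L_def)
    show "0 < height D t" if "0 < t" "t < L" for t
      using height_D[of t] im(6)[of "i + 1 + t"] that by (simp add: L_def)
  qed (use im in \<open>auto simp: D_def L_def\<close>)
  then obtain e where e: "take L D = True # e @ [False]" "balanced e" by blast
  have "drop L D = drop m P" using im(3) by (simp add: D_def L_def)
  moreover have "drop i P = False # D"
    using Cons_nth_drop_Suc[of i P] im(1,2) by (simp add: D_def)
  ultimately have "drop i P = False # take L D @ drop m P"
    by (metis append_take_drop_id)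
  then have "P = take i P @ [False] @ take L D @ drop m P"
    by (metis append_Cons append_Nil append_take_drop_id)
  moreover have "Q = take i P @ take L D @ [False] @ drop m P"
    using Q by (simp add: D_def L_def)
  ultimately show ?thesis unfolding tamari_move_def
    by (rule_tac exI[of _ "take i P"], rule_tac exI[of _ e], rule_tac exI[of _ "drop m P"])
      (simp add: e)
qed

lemma tamari_move_imp_step:
  assumes "tamari_move P Q"
  shows "tamari_step P Q"
proof -
  obtain A e B where e: "balanced e" and P: "P = A @ [False, True] @ e @ [False] @ B"
    and Q: "Q = A @ [True] @ e @ [False, False] @ B"
    using assms unfolding tamari_move_def by auto
  have height_P: "height P (length A + j) = final_height A + height (False # True # e @ False # B) j" for j
    using height_append_length[of A] P by simp
  have start: "height P (length A + 1) = final_height A - 1"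
    using height_P[of 1] by (simp add: height_Cons)
  have stop: "height P (length A + (length e + 3)) = final_height A - 1"
    using height_P[of "length e + 3"] e
    by (simp add: height_Cons height_append height_beyond balanced_def numeral_3_eq_3)
  have above: "height P k > height P (length A + 1)"
    if "length A + 1 < k" "k < length A + length e + 3" for k
  proof -
    define j where "j = k - length A"
    have k: "k = length A + j" "1 < j" "j < length e + 3"
      using that by (auto simp: j_def)
    then have "height P k = final_height A + height e (j - 2)"
      using height_P[of j] by (auto simp: height_Cons height_append numeral_2_eq_2)
    then show ?thesis using start balanced_height_nonneg[OF e, of "j - 2"] by simp
  qed
  show ?thesis unfolding tamari_step_def
    by (rule exI[of _ "length A"], rule exI[of _ "length A + length e + 3"])
      (use start stop above P Q in \<open>auto simp: nth_append numeral_3_eq_3\<close>)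
qed

lemma tamari_le_eq: "tamari_le = (\<preceq>)"
proof -
  have "tamari_step = tamari_move"
    using tamari_step_imp_move tamari_move_imp_step by (intro ext) blast
  then show ?thesis unfolding tamari_le_def by simp
qed

lemma tamari_move_context: "tamari_move P Q \<Longrightarrow> tamari_move (A @ P @ B) (A @ Q @ B)"
  unfolding tamari_move_def by (metis append.assoc)

lemma tamari_leq_context: "P \<preceq> Q \<Longrightarrow> A @ P @ B \<preceq> A @ Q @ B"
  by (induction rule: rtranclp_induct) (auto intro: rtranclp.rtrancl_into_rtrancl tamari_move_context)

lemma tamari_leq_append: "P \<preceq> Q \<Longrightarrow> P' \<preceq> Q' \<Longrightarrow> P @ P' \<preceq> Q @ Q'"
  using tamari_leq_context[of P Q "[]" P'] tamari_leq_context[of P' Q' Q "[]"] by simp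

lemma balanced_swap_down:
  assumes "balanced (A @ False # E @ B)" "balanced E"
  shows "balanced (A @ E @ False # B)"
proof -
  let ?P = "A @ False # E @ B" and ?Q = "A @ E @ False # B"
  have A: "1 \<le> final_height A" using balanced_down_step assms(1) by blast
  have "0 \<le> height ?Q k" for k
  proof (cases "k \<le> length A + length E")
    case True
    then show ?thesis
      using balanced_height_nonneg[OF assms(1), of k] balanced_height_nonneg[OF assms(2), of "k - length A"] A
      by (auto simp: height_append)
  next
    case False
    then have "height ?Q k = height ?P k"
      using height_append_ge[of "A @ E @ [False]" k B] height_append_ge[of "A @ False # E" k B] by simp
    then show ?thesis using balanced_height_nonneg[OF assms(1)] by simp
  qed
  then show ?thesis using assms by (simp add: balanced_def)
qed

lemma tamari_move_balanced:
  assumes "tamari_move P Q" "balanced P"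
  shows "balanced Q"
proof -
  obtain A e B where "balanced e" "P = A @ False # (True # e @ [False]) @ B"
    "Q = A @ (True # e @ [False]) @ False # B"
    using assms(1) unfolding tamari_move_def by auto
  then show ?thesis
    using balanced_swap_down[of A "True # e @ [False]" B] balanced_elevate assms(2) by simp
qed

lemma tamari_leq_balanced: "P \<preceq> Q \<Longrightarrow> balanced P \<Longrightarrow> balanced Q"
  by (induction rule: rtranclp_induct) (auto intro: tamari_move_balanced)

lemma tamari_leq_length: "P \<preceq> Q \<Longrightarrow> length Q = length P"
  by (induction rule: rtranclp_induct) (auto simp: tamari_move_def)

text \<open>The down-step is moved past one excursion of \<open>Y\<close> at a time.\<close>
lemma tamari_leq_swap_down: "balanced Y \<Longrightarrow> A @ False # Y @ R \<preceq> A @ Y @ False # R"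
proof (induction "length Y" arbitrary: A Y rule: less_induct)
  case less
  show ?case
  proof (cases "Y = []")
    case False
    then obtain e Y' where Y: "Y = True # e @ False # Y'" "balanced e" "balanced Y'"
      using balanced_first_return less.prems by blast
    have "tamari_move (A @ False # Y @ R) ((A @ True # e @ [False]) @ False # Y' @ R)"
      unfolding tamari_move_def using Y by auto
    moreover have "(A @ True # e @ [False]) @ False # Y' @ R \<preceq> (A @ True # e @ [False]) @ Y' @ False # R"
      using less.hyps[of Y' "A @ True # e @ [False]"] Y by simp
    ultimately show ?thesis using Y by (simp add: converse_rtranclp_into_rtranclp)
  qed simp
qed

lemma mem_intervals_iff:
  "(P, Q) \<in> intervals n \<longleftrightarrow> balanced P \<and> balanced Q \<and> length P = 2 * n \<and> P \<preceq> Q"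
  unfolding intervals_def tamari_le_eq dyck_iff_balanced
  using tamari_leq_length tamari_leq_balanced by auto

lemma finite_intervals: "finite (intervals n)"
proof -
  have "intervals n \<subseteq> {w. length w = 2 * n} \<times> {w. length w = 2 * n}"
    unfolding intervals_def dyck_def by auto
  then show ?thesis
    using finite_lists_length_eq[of "UNIV :: bool set" "2 * n"] by (auto intro: finite_subset)
qed

lemma intervals_0: "intervals 0 = {([], [])}"
  unfolding intervals_def dyck_def tamari_le_def by auto

section \<open>Decomposition of intervals at the first return\<close>

lemma balanced_prefix_nonneg:
  assumes "balanced w" "v @ v' = w @ u" "length v \<le> length w"
  shows "0 \<le> final_height v"
proof -
  have "v = take (length v) w"
    using arg_cong[OF assms(2), of "take (length v)"] assms(3) by simp
  then show ?thesis
    using balanced_height_nonneg[OF assms(1), of "length v"] by (simp add: height_eq_final_height_take)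
qed

lemma tamari_leq_split:
  assumes "P \<preceq> Q" "balanced P" "Q = Q1 @ Q2" "balanced Q1" "balanced Q2"
  shows "\<exists>P1 P2. P = P1 @ P2 \<and> length P1 = length Q1 \<and> balanced P1 \<and> balanced P2
    \<and> P1 \<preceq> Q1 \<and> P2 \<preceq> Q2"
  using assms(1,3-5)
proof (induction arbitrary: Q1 Q2 rule: rtranclp_induct)
  case base
  then show ?case using assms(2) by auto
next
  case (step Q Q')
  have bQ: "balanced Q" using tamari_leq_balanced step.hyps(1) assms(2) by blast
  obtain A e B where e: "balanced e" and Q: "Q = A @ [False, True] @ e @ [False] @ B"
    and Q': "Q' = A @ [True] @ e @ [False, False] @ B"
    using step.hyps(2) unfolding tamari_move_def by auto
  have hA: "1 \<le> final_height A" using balanced_down_step bQ Q by simp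
  have "Q1 @ Q2 = A @ ([True] @ e @ [False, False]) @ B" using step.prems(1) Q' by simp
  from append_eq_append_split3[OF this]
  consider (left) A2 where "A = Q1 @ A2" "Q2 = A2 @ ([True] @ e @ [False, False]) @ B"
    | (right) B1 where "B = B1 @ Q2" "Q1 = A @ ([True] @ e @ [False, False]) @ B1"
    | (across) D D' where "Q1 = A @ D" "[True] @ e @ [False, False] = D @ D'" "D \<noteq> []" "D' \<noteq> []"
    by blast
  then show ?case
  proof cases
    case left
    define R where "R = A2 @ [False, True] @ e @ [False] @ B"
    have QR: "Q = Q1 @ R" unfolding R_def using Q left by simp
    have bR: "balanced R" using balanced_appendD2 QR bQ step.prems by blast
    from step.IH[OF QR step.prems(2) bR] obtain P1 P2 where
      P: "P = P1 @ P2" "length P1 = length Q1" "balanced P1" "balanced P2" "P1 \<preceq> Q1" "P2 \<preceq> R"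
      by blast
    have "tamari_move R Q2" unfolding tamari_move_def R_def using left e by auto
    then have "P2 \<preceq> Q2" using P(6) by (meson rtranclp.rtrancl_into_rtrancl)
    then show ?thesis using P by blast
  next
    case right
    define L where "L = A @ [False, True] @ e @ [False] @ B1"
    have QL: "Q = L @ Q2" unfolding L_def using Q right by simp
    have "final_height L = final_height Q1" unfolding L_def using right by simp
    then have bL: "balanced L" using balanced_appendD1 QL bQ step.prems by (metis balanced_def)
    from step.IH[OF QL bL step.prems(3)] obtain P1 P2 where
      P: "P = P1 @ P2" "length P1 = length L" "balanced P1" "balanced P2" "P1 \<preceq> L" "P2 \<preceq> Q2"
      by blast
    have "tamari_move L Q1" unfolding tamari_move_def L_def using right e by auto
    moreover have "length L = length Q1" unfolding L_def using right by simp
    ultimately show ?thesis using P by (auto intro: rtranclp.rtrancl_into_rtrancl)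
  next
    case across
    have "length D + length D' = length e + 3" using arg_cong[OF across(2), of length] by simp
    then have "D @ D' = (True # e @ [False]) @ [False]" "length D \<le> length (True # e @ [False])"
      using across(2,4) by (auto simp: neq_Nil_conv)
    then have "0 \<le> final_height D"
      using balanced_prefix_nonneg balanced_elevate[OF e] by blast
    moreover have "final_height Q1 = 0" using step.prems by (simp add: balanced_def)
    ultimately show ?thesis using across hA by simp
  qed
qed

lemma tamari_move_elevated_cases:
  assumes move: "tamari_move (True # Q1 @ False # Q2) Q'" and "balanced Q1" "balanced Q2"
  shows "(\<exists>Q1'. tamari_move Q1 Q1' \<and> Q' = True # Q1' @ False # Q2)
    \<or> (\<exists>e B. balanced e \<and> Q2 = True # e @ False # B \<and> Q' = True # (Q1 @ True # e @ [False]) @ False # B)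
    \<or> (\<exists>Q2'. tamari_move Q2 Q2' \<and> Q' = True # Q1 @ False # Q2')"
proof -
  have bQ: "balanced (True # Q1 @ False # Q2)"
    using balanced_append[OF balanced_elevate[OF assms(2)] assms(3)] by simp
  obtain A e B where e: "balanced e" and Q: "True # Q1 @ False # Q2 = A @ [False, True] @ e @ [False] @ B"
    and Q': "Q' = A @ [True] @ e @ [False, False] @ B"
    using move unfolding tamari_move_def by auto
  have hA: "1 \<le> final_height A" using balanced_down_step bQ Q by simp
  then obtain A' where A': "A = True # A'" using Q by (cases A) auto
  have "(True # Q1 @ [False]) @ Q2 = A @ ([False, True] @ e @ [False]) @ B" using Q by simp
  from append_eq_append_split3[OF this]
  consider (right) A2 where "A = (True # Q1 @ [False]) @ A2" "Q2 = A2 @ ([False, True] @ e @ [False]) @ B"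
    | (left) B1 where "B = B1 @ Q2" "True # Q1 @ [False] = A @ ([False, True] @ e @ [False]) @ B1"
    | (across) D D' where "True # Q1 @ [False] = A @ D" "[False, True] @ e @ [False] = D @ D'"
        "D \<noteq> []" "D' \<noteq> []" "Q2 = D' @ B"
    by blast
  then show ?thesis
  proof cases
    case right
    have "tamari_move Q2 (A2 @ [True] @ e @ [False, False] @ B)"
      unfolding tamari_move_def using right e by auto
    then show ?thesis using right Q' by auto
  next
    case left
    show ?thesis
    proof (cases B1 rule: rev_cases)
      case Nil
      then have "Q1 = A' @ False # (True # e)" using left A' by simp
      then show ?thesis
        using balanced_down_step[of A' "True # e"] assms(2) e by (simp add: balanced_def)
    next
      case (snoc B1' c)
      then have Q1: "Q1 = A' @ [False, True] @ e @ [False] @ B1'" and "c = False"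
        using left A' by auto
      have "tamari_move Q1 (A' @ [True] @ e @ [False, False] @ B1')"
        unfolding tamari_move_def using Q1 e by auto
      then show ?thesis using Q' A' left snoc \<open>c = False\<close> by auto
    qed
  next
    case across
    have "D = [False]"
    proof (rule ccontr)
      assume "D \<noteq> [False]"
      then obtain D2 where D2: "D = [False, True] @ D2" "D2 @ D' = e @ [False]"
        using across(2,3) by (cases D; cases "tl D") auto
      have "length D2 + length D' = length e + 1" using arg_cong[OF D2(2), of length] by simp
      then have "length D2 \<le> length e" using across(4) by (auto simp: neq_Nil_conv)
      then have "0 \<le> final_height D2" using balanced_prefix_nonneg[OF e D2(2)] by blast
      moreover have "final_height (A @ D) = 0"
        using across(1)[symmetric] assms(2) by (simp add: balanced_def)
      ultimately show False using hA D2(1) by simp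
    qed
    then have "Q1 = A'" "D' = True # e @ [False]" using across(1,2) A' by auto
    then show ?thesis using across Q' A' e by auto
  qed
qed

lemma tamari_leq_decompose:
  assumes "True # X @ False # P' \<preceq> Q" "balanced X" "balanced P'"
  shows "\<exists>Y P2 Q1 Q2. P' = Y @ P2 \<and> balanced Y \<and> balanced P2 \<and> balanced Q1 \<and> balanced Q2
     \<and> Q = True # Q1 @ False # Q2 \<and> X @ Y \<preceq> Q1 \<and> P2 \<preceq> Q2"
  using assms(1)
proof (induction rule: rtranclp_induct)
  case base
  show ?case using assms(2,3) by (rule_tac exI[of _ "[]"], rule_tac exI[of _ P'], rule_tac exI[of _ X]) auto
next
  case (step Q Q')
  then obtain Y P2 Q1 Q2 where IH: "P' = Y @ P2" "balanced Y" "balanced P2" "balanced Q1" "balanced Q2"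
     "Q = True # Q1 @ False # Q2" "X @ Y \<preceq> Q1" "P2 \<preceq> Q2"
    by blast
  from tamari_move_elevated_cases[of Q1 Q2 Q'] step.hyps(2) IH
  consider (inside) Q1' where "tamari_move Q1 Q1'" "Q' = True # Q1' @ False # Q2"
    | (across) e B where "balanced e" "Q2 = True # e @ False # B"
        "Q' = True # (Q1 @ True # e @ [False]) @ False # B"
    | (after) Q2' where "tamari_move Q2 Q2'" "Q' = True # Q1 @ False # Q2'"
    by blast
  then show ?case
  proof cases
    case inside
    then show ?thesis using IH tamari_move_balanced
      by (rule_tac exI[of _ Y], rule_tac exI[of _ P2], rule_tac exI[of _ Q1'], rule_tac exI[of _ Q2])
        (auto intro: rtranclp.rtrancl_into_rtrancl)
  next
    case after
    then show ?thesis using IH tamari_move_balanced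
      by (rule_tac exI[of _ Y], rule_tac exI[of _ P2], rule_tac exI[of _ Q1], rule_tac exI[of _ Q2'])
        (auto intro: rtranclp.rtrancl_into_rtrancl)
  next
    case across
    have E: "balanced (True # e @ [False])" using balanced_elevate[OF across(1)] .
    have Q2: "Q2 = (True # e @ [False]) @ B" using across by simp
    have bB: "balanced B" using balanced_appendD2 IH(5) Q2 E by metis
    from tamari_leq_split[OF IH(8) IH(3) Q2 E bB] obtain Z W where
      ZW: "P2 = Z @ W" "balanced Z" "balanced W" "Z \<preceq> True # e @ [False]" "W \<preceq> B"
      by blast
    have "X @ Y @ Z \<preceq> Q1 @ True # e @ [False]" using tamari_leq_append[OF IH(7) ZW(4)] by simp
    then show ?thesis
      using IH ZW across balanced_append[OF IH(2) ZW(2)] balanced_append[OF IH(4) E] bB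
      by (rule_tac exI[of _ "Y @ Z"], rule_tac exI[of _ W], rule_tac exI[of _ "Q1 @ True # e @ [False]"],
          rule_tac exI[of _ B]) auto
  qed
qed

lemma tamari_leq_compose:
  assumes "balanced Y" "X @ Y \<preceq> Q1" "P2 \<preceq> Q2"
  shows "True # X @ False # Y @ P2 \<preceq> True # Q1 @ False # Q2"
proof -
  have "True # X @ False # Y @ P2 \<preceq> True # X @ Y @ False # P2"
    using tamari_leq_swap_down[OF assms(1), of "True # X" P2] by simp
  also have "\<dots> \<preceq> True # Q1 @ False # P2"
    using tamari_leq_context[OF assms(2), of "[True]" "False # P2"] by simp
  also have "\<dots> \<preceq> True # Q1 @ False # Q2"
    using tamari_leq_context[OF assms(3), of "True # Q1 @ [False]" "[]"] by simp
  finally show ?thesis .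
qed

text \<open>The inverse of the first-return decomposition of \<open>tamari_leq_decompose\<close>, with
  \<open>X = take k P1\<close> and \<open>Y = drop k P1\<close>.\<close>
definition glue :: "bool list \<times> bool list \<Rightarrow> nat \<Rightarrow> bool list \<times> bool list \<Rightarrow> bool list \<times> bool list" where
  "glue pq1 k pq2 = (True # take k (fst pq1) @ False # drop k (fst pq1) @ fst pq2,
     True # snd pq1 @ False # snd pq2)"

definition glue_domain :: "nat \<Rightarrow> (nat \<times> (bool list \<times> bool list) \<times> (bool list \<times> bool list) \<times> nat) set" where
  "glue_domain n = (SIGMA n1:{..n}. SIGMA pq1:intervals n1. SIGMA pq2:intervals (n - n1). contacts (fst pq1))"

lemma finite_contacts: "finite (contacts w)"
  unfolding contacts_def by auto

lemma mem_contacts_le_length: "k \<in> contacts w \<Longrightarrow> k \<le> length w"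
  by (simp add: contacts_def)

lemma glue_mem_intervals:
  assumes "(P1, Q1) \<in> intervals n1" "(P2, Q2) \<in> intervals n2" "k \<in> contacts P1"
  shows "glue (P1, Q1) k (P2, Q2) \<in> intervals (Suc (n1 + n2))"
proof -
  have b: "balanced P1" "balanced Q1" "length P1 = 2 * n1" "P1 \<preceq> Q1"
    "balanced P2" "balanced Q2" "length P2 = 2 * n2" "P2 \<preceq> Q2"
    using assms(1,2) mem_intervals_iff by blast+
  have cut: "balanced (take k P1)" "balanced (drop k P1)"
    using balanced_take_contact b(1) assms(3) by blast+
  have "True # take k P1 @ False # drop k P1 @ P2 \<preceq> True # Q1 @ False # Q2"
    using tamari_leq_compose[OF cut(2)] b by simp
  moreover have "balanced (True # take k P1 @ False # drop k P1 @ P2)"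
    using balanced_append[OF balanced_elevate[OF cut(1)] balanced_append[OF cut(2) b(5)]] by simp
  moreover have "balanced (True # Q1 @ False # Q2)"
    using balanced_append[OF balanced_elevate[OF b(2)] b(6)] by simp
  moreover have "length (True # take k P1 @ False # drop k P1 @ P2) = 2 * Suc (n1 + n2)"
    using b mem_contacts_le_length[OF assms(3)] by simp
  ultimately show ?thesis unfolding glue_def by (simp add: mem_intervals_iff)
qed

lemma glue_inj:
  assumes eq: "glue (P1, Q1) k (P2, Q2) = glue (P1', Q1') k' (P2', Q2')"
    and "(P1, Q1) \<in> intervals n1" "(P1', Q1') \<in> intervals n1'"
    and "k \<in> contacts P1" "k' \<in> contacts P1'"
  shows "P1 = P1' \<and> Q1 = Q1' \<and> k = k' \<and> P2 = P2' \<and> Q2 = Q2'"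
proof -
  have b: "balanced P1" "balanced Q1" "balanced P1'" "balanced Q1'" "P1 \<preceq> Q1" "P1' \<preceq> Q1'"
    using assms(2,3) mem_intervals_iff by blast+
  have cut: "balanced (take k P1)" "balanced (take k' P1')"
    using balanced_take_contact b assms(4,5) by blast+
  have "True # Q1 @ False # Q2 = True # Q1' @ False # Q2'" using eq by (simp add: glue_def)
  then have Q: "Q1 = Q1'" "Q2 = Q2'" using first_return_unique b(2,4) by blast+
  have "True # take k P1 @ False # (drop k P1 @ P2) = True # take k' P1' @ False # (drop k' P1' @ P2')"
    using eq by (simp add: glue_def)
  then have X: "take k P1 = take k' P1'" "drop k P1 @ P2 = drop k' P1' @ P2'"
    using first_return_unique cut by blast+
  have "length P1 = length P1'" using Q(1) tamari_leq_length b(5,6) by metis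
  moreover have k: "k = k'"
    using X(1) mem_contacts_le_length assms(4,5) by (metis length_take min_absorb2)
  ultimately have "drop k P1 = drop k' P1'" "P2 = P2'" using X(2) by simp_all
  then show ?thesis using X(1) Q k by (metis append_take_drop_id)
qed

lemma intervals_Suc_decompose:
  assumes "(P, Q) \<in> intervals (Suc n)"
  shows "\<exists>t \<in> glue_domain n. (P, Q) = (\<lambda>(_, pq1, pq2, k). glue pq1 k pq2) t"
proof -
  have b: "balanced P" "length P = 2 * Suc n" "P \<preceq> Q" using assms mem_intervals_iff by blast+
  then obtain X P' where XP: "P = True # X @ False # P'" "balanced X" "balanced P'"
    using balanced_first_return by fastforce
  from tamari_leq_decompose[OF b(3)[unfolded XP(1)] XP(2,3)] obtain Y P2 Q1 Q2 where
    d: "P' = Y @ P2" "balanced Y" "balanced P2" "balanced Q1" "balanced Q2"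
      "Q = True # Q1 @ False # Q2" "X @ Y \<preceq> Q1" "P2 \<preceq> Q2"
    by blast
  define n1 where "n1 = length Q1 div 2"
  have "length Q1 = 2 * n1" unfolding n1_def using balanced_length[OF d(4)] by simp
  then have lP1: "length (X @ Y) = 2 * n1" using tamari_leq_length[OF d(7)] by simp
  have "n1 \<le> n" "length P2 = 2 * (n - n1)" using b(2) XP d lP1 by simp_all
  moreover have "(X @ Y, Q1) \<in> intervals n1"
    using mem_intervals_iff lP1 d balanced_append XP by blast
  moreover have "(P2, Q2) \<in> intervals (n - n1)"
    using mem_intervals_iff \<open>length P2 = _\<close> d by blast
  moreover have "length X \<in> contacts (X @ Y)"
    using XP(2) by (simp add: contacts_def height_append height_beyond balanced_def)
  ultimately have "(n1, (X @ Y, Q1), (P2, Q2), length X) \<in> glue_domain n"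
    unfolding glue_domain_def by auto
  moreover have "(P, Q) = glue (X @ Y, Q1) (length X) (P2, Q2)"
    using XP d by (simp add: glue_def)
  ultimately show ?thesis by force
qed

lemma bij_betw_glue:
  "bij_betw (\<lambda>(_, pq1, pq2, k). glue pq1 k pq2) (glue_domain n) (intervals (Suc n))"
proof (rule bij_betw_imageI)
  show "inj_on (\<lambda>(_, pq1, pq2, k). glue pq1 k pq2) (glue_domain n)"
  proof (rule inj_onI)
    fix t t' assume "t \<in> glue_domain n" "t' \<in> glue_domain n"
    then obtain n1 P1 Q1 P2 Q2 k n1' P1' Q1' P2' Q2' k' where
      t: "t = (n1, (P1, Q1), (P2, Q2), k)" "t' = (n1', (P1', Q1'), (P2', Q2'), k')"
      and m: "(P1, Q1) \<in> intervals n1" "k \<in> contacts P1" "(P1', Q1') \<in> intervals n1'" "k' \<in> contacts P1'"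
      unfolding glue_domain_def by (cases t, cases t') auto
    have "length P1 = 2 * n1" "length P1' = 2 * n1'" using m mem_intervals_iff by blast+
    moreover assume "(\<lambda>(_, pq1, pq2, k). glue pq1 k pq2) t = (\<lambda>(_, pq1, pq2, k). glue pq1 k pq2) t'"
    then have "glue (P1, Q1) k (P2, Q2) = glue (P1', Q1') k' (P2', Q2')" using t by simp
    note glue_inj[OF this m(1) m(3) m(2) m(4)]
    ultimately show "t = t'" using t by simp
  qed
  show "(\<lambda>(_, pq1, pq2, k). glue pq1 k pq2) ` glue_domain n = intervals (Suc n)"
  proof
    show "(\<lambda>(_, pq1, pq2, k). glue pq1 k pq2) ` glue_domain n \<subseteq> intervals (Suc n)"
      unfolding glue_domain_def using glue_mem_intervals by fastforce
    show "intervals (Suc n) \<subseteq> (\<lambda>(_, pq1, pq2, k). glue pq1 k pq2) ` glue_domain n"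
    proof
      fix pq assume "pq \<in> intervals (Suc n)"
      then show "pq \<in> (\<lambda>(_, pq1, pq2, k). glue pq1 k pq2) ` glue_domain n"
        using intervals_Suc_decompose[of "fst pq" "snd pq"] by (simp add: image_iff)
    qed
  qed
qed

lemma sum_intervals_Suc:
  "sum f (intervals (Suc n)) = (\<Sum>n1\<le>n. \<Sum>pq1\<in>intervals n1. \<Sum>pq2\<in>intervals (n - n1).
     \<Sum>k\<in>contacts (fst pq1). f (glue pq1 k pq2))"
proof -
  have "sum f (intervals (Suc n)) = (\<Sum>(_, pq1, pq2, k) \<in> glue_domain n. f (glue pq1 k pq2))"
    using sum.reindex_bij_betw[OF bij_betw_glue, of f n] by (simp add: case_prod_beta')
  also have "\<dots> = (\<Sum>n1\<le>n. \<Sum>pq1\<in>intervals n1. \<Sum>pq2\<in>intervals (n - n1).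
     \<Sum>k\<in>contacts (fst pq1). f (glue pq1 k pq2))"
    unfolding glue_domain_def
    by (subst sum.Sigma, auto simp: finite_intervals finite_contacts finite_SigmaI intro!: sum.cong)+
  finally show ?thesis .
qed

section \<open>Statistics of a glued interval\<close>

definition up_positions :: "bool list \<Rightarrow> nat list" where
  "up_positions w = filter (\<lambda>i. w ! i) [0..<length w]"

definition contact_list :: "bool list \<Rightarrow> nat list" where
  "contact_list w = filter (\<lambda>k. height w k = 0) [0..<Suc (length w)]"

lemma upstart_eq_nth: "upstart w j = up_positions w ! (j - 1)"
  by (simp add: upstart_def up_positions_def)

lemma up_positions_Nil [simp]: "up_positions [] = []"
  by (simp add: up_positions_def)

lemma up_positions_Cons:
  "up_positions (b # w) = (if b then 0 # map Suc (up_positions w) else map Suc (up_positions w))"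
proof -
  have "[0..<length (b # w)] = 0 # map Suc [0..<length w]"
    by (simp add: map_Suc_upt upt_conv_Cons del: upt_Suc)
  then show ?thesis by (simp add: up_positions_def filter_map o_def)
qed

lemma up_positions_append:
  "up_positions (v @ w) = up_positions v @ map (\<lambda>i. i + length v) (up_positions w)"
  by (induction v) (auto simp: up_positions_Cons o_def)

lemma up_positions_elevate:
  "up_positions (True # v @ False # w)
     = 0 # map Suc (up_positions v) @ map (\<lambda>i. i + (length v + 2)) (up_positions w)"
  by (simp add: up_positions_Cons up_positions_append o_def)

lemma length_up_positions: "length (up_positions w) = length (filter id w)"
  by (induction w) (auto simp: up_positions_Cons)

lemma up_positions_less: "i \<in> set (up_positions w) \<Longrightarrow> i < length w"
  by (auto simp: up_positions_def)

lemma contacts_eq_set: "contacts w = set (contact_list w)"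
  by (auto simp: contacts_def contact_list_def less_Suc_eq_le simp del: upt_Suc)

lemma card_contacts_filter: "card {c \<in> contacts w. p c} = length (filter p (contact_list w))"
proof -
  have "{c \<in> contacts w. p c} = set (filter p (contact_list w))" by (auto simp: contacts_eq_set)
  moreover have "distinct (filter p (contact_list w))" by (simp add: contact_list_def del: upt_Suc)
  ultimately show ?thesis using distinct_card by metis
qed

lemma contact_eq_length: "contact w = length (contact_list w)"
  using card_contacts_filter[of w "\<lambda>_. True"] by (simp add: contact_def)

lemma contact_le_eq: "contact_le w j = length (filter (\<lambda>k. k \<le> upstart w j) (contact_list w))"
  using card_contacts_filter[of w "\<lambda>k. k \<le> upstart w j"] by (simp add: contact_le_def)

lemma contact_gt_eq: "contact_gt w j = length (filter (\<lambda>k. upstart w j < k) (contact_list w))"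
  using card_contacts_filter[of w "\<lambda>k. upstart w j < k"] by (simp add: contact_gt_def)

lemma contact_list_hd: "contact_list w = 0 # tl (contact_list w)"
  by (simp add: contact_list_def upt_conv_Cons del: upt_Suc)

lemma tl_contact_list: "tl (contact_list w) = filter (\<lambda>k. height w k = 0) [1..<Suc (length w)]"
  by (simp add: contact_list_def upt_conv_Cons del: upt_Suc)

lemma tl_contact_list_bounds: "c \<in> set (tl (contact_list w)) \<Longrightarrow> 1 \<le> c \<and> c \<le> length w"
  by (simp add: tl_contact_list del: upt_Suc)

lemma contact_pos: "1 \<le> contact w"
  using arg_cong[OF contact_list_hd[of w], of length] by (simp add: contact_eq_length)

lemma contact_list_append:
  assumes "final_height v = 0"
  shows "contact_list (v @ w) = contact_list v @ map (\<lambda>k. k + length v) (tl (contact_list w))"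
proof -
  have "[0..<Suc (length v) + length w] = [0..<Suc (length v)] @ [Suc (length v)..<Suc (length v) + length w]"
    by (rule upt_add_eq_append) simp
  moreover have "map (\<lambda>k. k + length v) [1..<Suc (length w)] = [Suc (length v)..<Suc (length v) + length w]"
    by (induction w) auto
  ultimately have range: "[0..<Suc (length (v @ w))]
      = [0..<Suc (length v)] @ map (\<lambda>k. k + length v) [1..<Suc (length w)]"
    by simp
  have left: "filter (\<lambda>k. height (v @ w) k = 0) [0..<Suc (length v)] = contact_list v"
    unfolding contact_list_def by (rule filter_cong) (auto simp: height_append)
  have right: "filter (\<lambda>k. height (v @ w) k = 0) (map (\<lambda>k. k + length v) [1..<Suc (length w)])
     = map (\<lambda>k. k + length v) (tl (contact_list w))"
    unfolding tl_contact_list filter_map o_def using assms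
    by (intro arg_cong[where f = "map _"] filter_cong) (auto simp: height_append add.commute)
  show ?thesis unfolding contact_list_def[of "v @ w"] range filter_append left right ..
qed

lemma contact_list_last:
  assumes "final_height v = 0"
  obtains pre where "contact_list v = pre @ [length v]" "\<forall>c\<in>set pre. c < length v"
proof -
  have "contact_list v = filter (\<lambda>k. height v k = 0) [0..<length v] @ [length v]"
    unfolding contact_list_def using assms by (simp add: height_beyond)
  then show thesis using that by fastforce
qed

lemma contact_list_elevate:
  assumes "balanced v"
  shows "contact_list (True # v @ False # w)
    = [0, length v + 2] @ map (\<lambda>k. k + (length v + 2)) (tl (contact_list w))"
proof -
  have "[0..<Suc (length (True # v @ [False]))] = [0] @ [Suc 0..<length v + 2] @ [length v + 2]"
    using upt_Suc_append[of 0 "length v + 2"] upt_conv_Cons[of 0 "length v + 2"] by (simp del: upt_Suc)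
  moreover have "height (True # v @ [False]) k \<noteq> 0" if "k \<in> set [Suc 0..<length v + 2]" for k
    using that balanced_height_nonneg[OF assms, of "k - 1"] by (auto simp: height_Cons height_append)
  moreover have "height (True # v @ [False]) (length v + 2) = 0"
    using assms by (simp add: height_beyond balanced_def)
  ultimately have "contact_list (True # v @ [False]) = [0, length v + 2]"
    unfolding contact_list_def by (simp add: filter_empty_conv del: upt_Suc)
  then show ?thesis
    using contact_list_append[of "True # v @ [False]" w] assms by (simp add: balanced_def)
qed

lemma stats_first_up:
  assumes "balanced w" "w \<noteq> []"
  shows "Ptilde w 1 = 0 \<and> contact_le w 1 = 1 \<and> contact_gt w 1 = contact w - 1"
proof -
  obtain w' where "w = True # w'" using assms balanced_hd by (cases w) auto
  then have u: "upstart w 1 = 0" by (simp add: upstart_eq_nth up_positions_Cons)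
  define T where "T = tl (contact_list w)"
  have c: "contact_list w = 0 # T" unfolding T_def by (rule contact_list_hd)
  have "\<forall>c\<in>set T. 0 < c" using tl_contact_list_bounds unfolding T_def by fastforce
  then have "contact_le w 1 = 1" "contact_gt w 1 = contact w - 1"
    unfolding contact_le_eq contact_gt_eq contact_eq_length u c
    by (simp_all add: filter_empty_conv filter_id_conv)
  then show ?thesis using u by (simp add: Ptilde_def)
qed

text \<open>\<open>X @ Y\<close> is the lower path of the first interval, cut at its contact \<open>length X\<close>.\<close>
locale glued =
  fixes X Y P2 Q1 Q2 :: "bool list"
  assumes balanced_parts: "balanced X" "balanced Y" "balanced P2" "balanced Q1" "balanced Q2"
    and length_Q1: "length Q1 = length X + length Y"
    and length_Q2: "length Q2 = length P2"
begin

abbreviation "lower \<equiv> True # X @ False # Y @ P2"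
abbreviation "upper \<equiv> True # Q1 @ False # Q2"
abbreviation "nX \<equiv> length (up_positions X)"
abbreviation "nY \<equiv> length (up_positions Y)"
abbreviation "CY \<equiv> tl (contact_list Y)"
abbreviation "C2 \<equiv> tl (contact_list P2)"

lemma final_height_X: "final_height X = 0" and final_height_Y: "final_height Y = 0"
  using balanced_parts by (simp_all add: balanced_def)

lemma length_up_positions_Q1: "length (up_positions Q1) = nX + nY"
  using balanced_length balanced_parts length_Q1 by (simp add: length_up_positions)

lemma length_up_positions_Q2: "length (up_positions Q2) = length (up_positions P2)"
  using balanced_length balanced_parts length_Q2 by (simp add: length_up_positions)

lemma up_positions_lower: "up_positions lower = 0 # map Suc (up_positions X)
    @ map (\<lambda>i. i + (length X + 2)) (up_positions Y @ map (\<lambda>i. i + length Y) (up_positions P2))"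
  by (simp add: up_positions_elevate up_positions_append)

lemma contact_list_lower:
  "contact_list lower = [0, length X + 2] @ map (\<lambda>k. k + (length X + 2)) (CY @ map (\<lambda>k. k + length Y) C2)"
proof -
  have "tl (contact_list (Y @ P2)) = CY @ map (\<lambda>k. k + length Y) C2"
    using contact_list_append[OF final_height_Y, of P2] contact_list_hd[of Y] by (metis append_Cons list.sel(3))
  then show ?thesis using contact_list_elevate[OF balanced_parts(1), of "Y @ P2"] by simp
qed

lemma contact_list_P1:
  obtains pre where "contact_list (X @ Y) = pre @ [length X] @ map (\<lambda>k. k + length X) CY"
    "\<forall>c\<in>set pre. c < length X"
  using contact_list_append[OF final_height_X, of Y] contact_list_last[OF final_height_X] by auto

lemma CY_bounds: "c \<in> set CY \<Longrightarrow> 1 \<le> c \<and> c \<le> length Y"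
  and C2_bounds: "c \<in> set C2 \<Longrightarrow> 1 \<le> c \<and> c \<le> length P2"
  using tl_contact_list_bounds by blast+

lemma card_contacts_from_X: "card {c \<in> contacts (X @ Y). length X \<le> c} = 1 + length CY"
proof -
  obtain pre where p: "contact_list (X @ Y) = pre @ [length X] @ map (\<lambda>k. k + length X) CY"
    "\<forall>c\<in>set pre. c < length X"
    using contact_list_P1 by blast
  have "filter (\<lambda>c. length X \<le> c) pre = []" using p(2) by (auto simp: filter_empty_conv)
  then show ?thesis unfolding card_contacts_filter p(1) by (simp add: o_def)
qed

lemma contact_P2: "contact P2 = 1 + length C2"
  unfolding contact_eq_length using contact_list_hd[of P2] by (metis length_Cons plus_1_eq_Suc)

lemma stats_in_X:
  assumes "1 \<le> j" "j \<le> nX"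
  shows "upstart (X @ Y) j < length X \<and> Ptilde lower (Suc j) = Ptilde (X @ Y) j + 1
    \<and> Ptilde upper (Suc j) = Ptilde Q1 j + 1 \<and> contact_le lower (Suc j) = 1
    \<and> contact_gt lower (Suc j) = card {c \<in> contacts (X @ Y). length X \<le> c} - 1 + contact P2"
proof -
  define u where "u = up_positions X ! (j - 1)"
  have jl: "j - 1 < nX" using assms by simp
  have ul: "u < length X" unfolding u_def using up_positions_less jl nth_mem by blast
  have u1: "upstart (X @ Y) j = u"
    unfolding upstart_eq_nth up_positions_append u_def using jl by (simp add: nth_append)
  have uP: "upstart lower (Suc j) = Suc u"
    unfolding upstart_eq_nth up_positions_lower u_def using jl assms(1) by (simp add: nth_Cons' nth_append)
  have jq: "j - 1 < length (up_positions Q1)" using jl length_up_positions_Q1 by simp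
  have uQ: "upstart upper (Suc j) = Suc (upstart Q1 j)"
    unfolding upstart_eq_nth up_positions_elevate using jq assms(1) by (simp add: nth_Cons' nth_append)
  have uQl: "upstart Q1 j < length Q1" unfolding upstart_eq_nth using up_positions_less jq nth_mem by blast
  have "Ptilde lower (Suc j) = 1 + height X u"
    unfolding Ptilde_def uP using height_elevated_inside[of u X "Y @ P2"] ul by simp
  then have hP: "Ptilde lower (Suc j) = Ptilde (X @ Y) j + 1"
    unfolding Ptilde_def u1 using ul by (simp add: height_append)
  have hQ: "Ptilde upper (Suc j) = Ptilde Q1 j + 1"
    unfolding Ptilde_def uQ using height_elevated_inside[of "upstart Q1 j" Q1 Q2] uQl by simp
  have "filter (\<lambda>k. k \<le> Suc u) (map (\<lambda>k. k + (length X + 2)) (CY @ map (\<lambda>k. k + length Y) C2)) = []"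
    using ul by (auto simp: filter_empty_conv)
  then have le: "contact_le lower (Suc j) = 1"
    unfolding contact_le_eq uP contact_list_lower filter_append using ul by simp
  have "filter (\<lambda>k. Suc u < k) (map (\<lambda>k. k + (length X + 2)) (CY @ map (\<lambda>k. k + length Y) C2))
     = map (\<lambda>k. k + (length X + 2)) (CY @ map (\<lambda>k. k + length Y) C2)"
    using ul by (intro filter_True) auto
  then have gt: "contact_gt lower (Suc j) = 1 + length CY + length C2"
    unfolding contact_gt_eq uP contact_list_lower filter_append using ul by simp
  show ?thesis using u1 ul hP hQ le gt card_contacts_from_X contact_P2 by simp
qed

lemma stats_in_Y:
  assumes "nX < j" "j \<le> nX + nY"
  shows "\<not> upstart (X @ Y) j < length X \<and> Ptilde lower (Suc j) = Ptilde (X @ Y) j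
    \<and> Ptilde upper (Suc j) = Ptilde Q1 j + 1
    \<and> contact_le lower (Suc j) = 1 + card {c \<in> contacts (X @ Y). length X \<le> c \<and> c \<le> upstart (X @ Y) j}
    \<and> contact_gt lower (Suc j) = contact_gt (X @ Y) j + contact P2 - 1"
proof -
  define i where "i = j - 1 - nX"
  define u where "u = up_positions Y ! i"
  have il: "i < nY" using assms unfolding i_def by simp
  have ul: "u < length Y" unfolding u_def using up_positions_less il nth_mem by blast
  have jx: "\<not> j - 1 < nX" "j - 1 - nX = i" using assms unfolding i_def by auto
  have u1: "upstart (X @ Y) j = length X + u"
    unfolding upstart_eq_nth up_positions_append u_def using jx il by (simp add: nth_append)
  have jj: "j = Suc (nX + i)" using jx assms by simp
  have uP: "upstart lower (Suc j) = length X + 2 + u"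
    unfolding upstart_eq_nth up_positions_lower u_def using jx il by (subst jj) (simp add: nth_append)
  have jq: "j - 1 < length (up_positions Q1)" using assms length_up_positions_Q1 by simp
  have uQ: "upstart upper (Suc j) = Suc (upstart Q1 j)"
    unfolding upstart_eq_nth up_positions_elevate using jq assms(1) by (simp add: nth_Cons' nth_append)
  have uQl: "upstart Q1 j < length Q1" unfolding upstart_eq_nth using up_positions_less jq nth_mem by blast
  have "Ptilde lower (Suc j) = height Y u"
    unfolding Ptilde_def uP using height_elevated_after[of X "Y @ P2" u] ul final_height_X
    by (simp add: height_append)
  then have hP: "Ptilde lower (Suc j) = Ptilde (X @ Y) j"
    unfolding Ptilde_def u1 using height_append_length[of X Y u] final_height_X by simp
  have hQ: "Ptilde upper (Suc j) = Ptilde Q1 j + 1"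
    unfolding Ptilde_def uQ using height_elevated_inside[of "upstart Q1 j" Q1 Q2] uQl by simp
  obtain pre where p: "contact_list (X @ Y) = pre @ [length X] @ map (\<lambda>k. k + length X) CY"
    "\<forall>c\<in>set pre. c < length X"
    using contact_list_P1 by blast
  have "filter (\<lambda>k. k + length Y \<le> u) C2 = []" using ul C2_bounds by (force simp: filter_empty_conv)
  then have le: "contact_le lower (Suc j) = 2 + length (filter (\<lambda>k. k \<le> u) CY)"
    unfolding contact_le_eq uP contact_list_lower filter_append by (simp add: o_def)
  have "filter (\<lambda>c. length X \<le> c \<and> c \<le> length X + u) pre = []"
    using p(2) by (auto simp: filter_empty_conv)
  then have cc: "card {c \<in> contacts (X @ Y). length X \<le> c \<and> c \<le> upstart (X @ Y) j}
      = 1 + length (filter (\<lambda>k. k \<le> u) CY)"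
    unfolding card_contacts_filter u1 p(1) filter_append by (simp add: o_def)
  have "filter (\<lambda>k. u < k + length Y) C2 = C2" using ul C2_bounds by (force simp: filter_id_conv)
  then have gt: "contact_gt lower (Suc j) = length (filter (\<lambda>k. u < k) CY) + length C2"
    unfolding contact_gt_eq uP contact_list_lower filter_append by (simp add: o_def)
  have "filter (\<lambda>c. length X + u < c) pre = []" using p(2) by (auto simp: filter_empty_conv)
  then have gt1: "contact_gt (X @ Y) j = length (filter (\<lambda>k. u < k) CY)"
    unfolding contact_gt_eq u1 p(1) filter_append by (simp add: o_def)
  show ?thesis using u1 hP hQ le cc gt gt1 contact_P2 by simp
qed

lemma stats_in_P2:
  assumes "1 \<le> j" "j \<le> length (up_positions P2)"
  shows "Ptilde lower (Suc (nX + nY) + j) = Ptilde P2 j \<and> Ptilde upper (Suc (nX + nY) + j) = Ptilde Q2 j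
    \<and> contact_le lower (Suc (nX + nY) + j) = card {c \<in> contacts (X @ Y). length X \<le> c} + contact_le P2 j
    \<and> contact_gt lower (Suc (nX + nY) + j) = contact_gt P2 j"
proof -
  define u where "u = up_positions P2 ! (j - 1)"
  have jl: "j - 1 < length (up_positions P2)" using assms by simp
  have ul: "u < length P2" unfolding u_def using up_positions_less jl nth_mem by blast
  have jP: "Suc (nX + nY) + j - 1 = Suc (nX + (nY + (j - 1)))" using assms(1) by simp
  have uP: "upstart lower (Suc (nX + nY) + j) = length X + 2 + (length Y + u)"
    unfolding upstart_eq_nth up_positions_lower u_def jP using jl by (simp add: nth_append)
  have jQ: "Suc (nX + nY) + j - 1 = Suc (length (up_positions Q1) + (j - 1))"
    using assms(1) length_up_positions_Q1 by simp
  have uQ: "upstart upper (Suc (nX + nY) + j) = length Q1 + 2 + up_positions Q2 ! (j - 1)"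
    unfolding upstart_eq_nth up_positions_elevate jQ using jl length_up_positions_Q2 by (simp add: nth_append)
  have "Ptilde lower (Suc (nX + nY) + j) = height lower (length X + 2 + (length Y + u))"
    unfolding Ptilde_def uP ..
  also have "\<dots> = height P2 u"
    using height_elevated_after[of X "Y @ P2" "length Y + u"] final_height_X final_height_Y
      height_append_length[of Y P2 u] by simp
  finally have hP: "Ptilde lower (Suc (nX + nY) + j) = Ptilde P2 j"
    by (simp add: Ptilde_def upstart_eq_nth u_def)
  have "Ptilde upper (Suc (nX + nY) + j) = height upper (length Q1 + 2 + up_positions Q2 ! (j - 1))"
    unfolding Ptilde_def uQ ..
  then have hQ: "Ptilde upper (Suc (nX + nY) + j) = Ptilde Q2 j"
    unfolding height_elevated_after using balanced_parts(4)
    by (simp add: balanced_def Ptilde_def upstart_eq_nth)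
  have "filter (\<lambda>k. k \<le> length Y + u) CY = CY" using CY_bounds by (force simp: filter_id_conv)
  then have le: "contact_le lower (Suc (nX + nY) + j) = 2 + length CY + length (filter (\<lambda>k. k \<le> u) C2)"
    unfolding contact_le_eq uP contact_list_lower filter_append by (simp add: o_def)
  have le2: "contact_le P2 j = 1 + length (filter (\<lambda>k. k \<le> u) C2)"
    unfolding contact_le_eq upstart_eq_nth u_def[symmetric] by (subst contact_list_hd) simp
  have "filter (\<lambda>k. length Y + u < k) CY = []" using CY_bounds by (force simp: filter_empty_conv)
  then have gt: "contact_gt lower (Suc (nX + nY) + j) = length (filter (\<lambda>k. u < k) C2)"
    unfolding contact_gt_eq uP contact_list_lower filter_append by (simp add: o_def)
  have gt2: "contact_gt P2 j = length (filter (\<lambda>k. u < k) C2)"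
    unfolding contact_gt_eq upstart_eq_nth u_def[symmetric] by (subst contact_list_hd) simp
  show ?thesis using hP hQ le le2 gt gt2 card_contacts_from_X by simp
qed

end

definition weight :: "'a::comm_ring_1 \<Rightarrow> 'a \<Rightarrow> 'a \<Rightarrow> 'a \<Rightarrow> bool list \<times> bool list \<Rightarrow> nat \<Rightarrow> 'a" where
  "weight x y r s pq j = r ^ nat (Ptilde (fst pq) j) * s ^ nat (Ptilde (snd pq) j)
     * x ^ contact_le (fst pq) j * y ^ contact_gt (fst pq) j"

lemma Ptilde_nonneg: "balanced w \<Longrightarrow> 0 \<le> Ptilde w j"
  by (simp add: Ptilde_def balanced_height_nonneg)

lemma glue_is_glued:
  assumes "(P1, Q1) \<in> intervals n1" "(P2, Q2) \<in> intervals n2" "k \<in> contacts P1"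
  shows "glued (take k P1) (drop k P1) P2 Q1 Q2"
    and "length (up_positions (take k P1)) + length (up_positions (drop k P1)) = n1"
    and "length (up_positions P2) = n2"
proof -
  have b: "balanced P1" "balanced Q1" "length P1 = 2 * n1" "P1 \<preceq> Q1"
    "balanced P2" "balanced Q2" "length P2 = 2 * n2" "P2 \<preceq> Q2"
    using assms(1,2) mem_intervals_iff by blast+
  show "glued (take k P1) (drop k P1) P2 Q1 Q2"
    using balanced_take_contact[OF b(1) assms(3)] b tamari_leq_length mem_contacts_le_length[OF assms(3)]
    by unfold_locales auto
  have "length (filter id (take k P1)) + length (filter id (drop k P1)) = length (filter id P1)"
    by (metis append_take_drop_id filter_append length_append)
  then show "length (up_positions (take k P1)) + length (up_positions (drop k P1)) = n1"
    using balanced_length[OF b(1)] b(3) unfolding length_up_positions by linarith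
  show "length (up_positions P2) = n2"
    using balanced_length[OF b(5)] b(7) by (simp add: length_up_positions)
qed

text \<open>Up-step \<open>j\<close> of \<open>P1\<close> becomes up-step \<open>j + 1\<close> of the glued interval; it is lifted in
  the lower path exactly when it lies before the contact \<open>k\<close>, and always in the upper path.\<close>
lemma weight_glue_left:
  assumes "(P1, Q1) \<in> intervals n1" "(P2, Q2) \<in> intervals n2" "k \<in> contacts P1"
    and j: "1 \<le> j" "j \<le> n1"
  shows "weight x y r s (glue (P1, Q1) k (P2, Q2)) (Suc j) = weight 1 1 r s (P1, Q1) j * s *
    (if upstart P1 j < k then r * x * y ^ (card {c \<in> contacts P1. k \<le> c} - 1 + contact P2)
     else x ^ (1 + card {c \<in> contacts P1. k \<le> c \<and> c \<le> upstart P1 j}) * y ^ (contact_gt P1 j + contact P2 - 1))"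
proof -
  interpret glued "take k P1" "drop k P1" P2 Q1 Q2 by (rule glue_is_glued[OF assms(1-3)])
  have n1: "nX + nY = n1" by (rule glue_is_glued[OF assms(1-3)])
  have P1: "take k P1 @ drop k P1 = P1" "length (take k P1) = k" "min (length P1) k = k"
    using mem_contacts_le_length[OF assms(3)] by simp_all
  have pos: "0 \<le> Ptilde P1 j" "0 \<le> Ptilde Q1 j"
    using Ptilde_nonneg assms(1) mem_intervals_iff by blast+
  have glue: "glue (P1, Q1) k (P2, Q2) = (lower, upper)" by (simp add: glue_def)
  have lift: "nat (h + 1) = Suc (nat h)" if "0 \<le> h" for h :: int using that by simp
  show ?thesis
  proof (cases "j \<le> nX")
    case True
    with stats_in_X[OF j(1)] P1 show ?thesis
      by (simp add: weight_def glue lift pos power_add mult_ac)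
  next
    case False
    with stats_in_Y[of j] j n1 P1 show ?thesis
      by (simp add: weight_def glue lift pos mult_ac)
  qed
qed

lemma weight_glue_right:
  assumes "(P1, Q1) \<in> intervals n1" "(P2, Q2) \<in> intervals n2" "k \<in> contacts P1"
    and j: "1 \<le> j" "j \<le> n2"
  shows "weight x y r s (glue (P1, Q1) k (P2, Q2)) (Suc n1 + j)
    = x ^ card {c \<in> contacts P1. k \<le> c} * weight x y r s (P2, Q2) j"
proof -
  interpret glued "take k P1" "drop k P1" P2 Q1 Q2 by (rule glue_is_glued[OF assms(1-3)])
  have "nX + nY = n1" "length (up_positions P2) = n2" by (rule glue_is_glued[OF assms(1-3)])+
  moreover have "take k P1 @ drop k P1 = P1" "length (take k P1) = k"
    using mem_contacts_le_length[OF assms(3)] by simp_all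
  ultimately show ?thesis
    using stats_in_P2[OF j(1)] j by (simp add: weight_def glue_def power_add mult_ac)
qed

text \<open>The contributions of the up-steps of \<open>P1\<close> lying before and after the chosen contact,
  and of the up-steps of \<open>P2\<close>, summed over all choices of the contact; they produce the second,
  third and fourth term of the functional equation.\<close>
definition contrib_before :: "'a::comm_ring_1 \<Rightarrow> 'a \<Rightarrow> 'a \<Rightarrow> 'a \<Rightarrow> nat \<Rightarrow> bool list \<times> bool list \<Rightarrow> bool list \<Rightarrow> 'a" where
  "contrib_before x y r s n1 pq1 P2 = (\<Sum>j=1..n1. weight 1 1 r s pq1 j
     * (r * s * x * y ^ contact P2 * (\<Sum>i<contact_gt (fst pq1) j. y ^ i)))"

definition contrib_after :: "'a::comm_ring_1 \<Rightarrow> 'a \<Rightarrow> 'a \<Rightarrow> 'a \<Rightarrow> nat \<Rightarrow> bool list \<times> bool list \<Rightarrow> bool list \<Rightarrow> 'a" where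
  "contrib_after x y r s n1 pq1 P2 = (\<Sum>j=1..n1. weight 1 1 r s pq1 j
     * (s * x ^ 2 * (\<Sum>i<contact_le (fst pq1) j. x ^ i) * y ^ (contact_gt (fst pq1) j + contact P2 - 1)))"

definition contrib_right :: "'a::comm_ring_1 \<Rightarrow> 'a \<Rightarrow> 'a \<Rightarrow> 'a \<Rightarrow> bool list \<Rightarrow> nat \<Rightarrow> bool list \<times> bool list \<Rightarrow> 'a" where
  "contrib_right x y r s P1 n2 pq2 = (\<Sum>j=1..n2. weight x y r s pq2 j * x * (\<Sum>i<contact P1. x ^ i))"

lemma sum_glue_weights:
  fixes x y r s :: "'a::comm_ring_1"
  assumes "(P1, Q1) \<in> intervals n1" "(P2, Q2) \<in> intervals n2"
  shows "(\<Sum>k\<in>contacts P1. \<Sum>j=2..Suc (n1 + n2). weight x y r s (glue (P1, Q1) k (P2, Q2)) j)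
    = contrib_before x y r s n1 (P1, Q1) P2 + contrib_after x y r s n1 (P1, Q1) P2
      + contrib_right x y r s P1 n2 (P2, Q2)"
proof -
  let ?S = "contacts P1"
  have fin: "finite ?S" by (rule finite_contacts)
  have "(\<Sum>k\<in>?S. \<Sum>j=2..Suc (n1 + n2). weight x y r s (glue (P1, Q1) k (P2, Q2)) j)
      = (\<Sum>k\<in>?S. (\<Sum>j=1..n1. weight x y r s (glue (P1, Q1) k (P2, Q2)) (Suc j))
          + (\<Sum>j=1..n2. x ^ card {c \<in> ?S. k \<le> c} * weight x y r s (P2, Q2) j))"
    unfolding sum_split_range
    by (intro sum.cong refl arg_cong2[where f = "(+)"]) (use weight_glue_right[OF assms] in auto)
  also have "\<dots> = (\<Sum>j=1..n1. \<Sum>k\<in>?S. weight x y r s (glue (P1, Q1) k (P2, Q2)) (Suc j))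
      + (\<Sum>j=1..n2. \<Sum>k\<in>?S. x ^ card {c \<in> ?S. k \<le> c} * weight x y r s (P2, Q2) j)"
    by (simp add: sum.distrib sum.swap[of _ ?S])
  also have "(\<Sum>j=1..n1. \<Sum>k\<in>?S. weight x y r s (glue (P1, Q1) k (P2, Q2)) (Suc j))
      = contrib_before x y r s n1 (P1, Q1) P2 + contrib_after x y r s n1 (P1, Q1) P2"
  proof -
    have "(\<Sum>k\<in>?S. weight x y r s (glue (P1, Q1) k (P2, Q2)) (Suc j))
        = weight 1 1 r s (P1, Q1) j * (r * s * x * y ^ contact P2 * (\<Sum>i<contact_gt P1 j. y ^ i))
          + weight 1 1 r s (P1, Q1) j * (s * x ^ 2 * (\<Sum>i<contact_le P1 j. x ^ i)
              * y ^ (contact_gt P1 j + contact P2 - 1))"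
      if j: "1 \<le> j" "j \<le> n1" for j
    proof -
      define u where "u = upstart P1 j"
      define a where "a = weight 1 1 r s (P1, Q1) j * s * r * x * y ^ contact P2"
      define b where "b = weight 1 1 r s (P1, Q1) j * s * y ^ (contact_gt P1 j + contact P2 - 1)"
      have "(\<Sum>k\<in>?S. weight x y r s (glue (P1, Q1) k (P2, Q2)) (Suc j))
          = (\<Sum>k\<in>?S. if u < k then a * y ^ (card {c \<in> ?S. k \<le> c} - 1)
               else b * x ^ (1 + card {c \<in> ?S. k \<le> c \<and> c \<le> u}))"
      proof (rule sum.cong[OF refl])
        fix k assume "k \<in> ?S"
        show "weight x y r s (glue (P1, Q1) k (P2, Q2)) (Suc j)
            = (if u < k then a * y ^ (card {c \<in> ?S. k \<le> c} - 1)
               else b * x ^ (1 + card {c \<in> ?S. k \<le> c \<and> c \<le> u}))"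
          unfolding weight_glue_left[OF assms \<open>k \<in> ?S\<close> j] a_def b_def u_def
          by (simp add: power_add mult_ac)
      qed
      also have "\<dots> = (\<Sum>k\<in>{k \<in> ?S. u < k}. a * y ^ (card {c \<in> ?S. k \<le> c} - 1))
          + (\<Sum>k\<in>{k \<in> ?S. k \<le> u}. b * x ^ (1 + card {c \<in> ?S. k \<le> c \<and> c \<le> u}))"
      proof -
        have "?S \<inter> {k. u < k} = {k \<in> ?S. u < k}" "?S \<inter> - {k. u < k} = {k \<in> ?S. k \<le> u}" by auto
        then show ?thesis by (subst sum.If_cases[OF fin]) (simp only:)
      qed
      also have "\<dots> = a * (\<Sum>i=1..card {c \<in> ?S. u < c}. y ^ (i - 1))
          + b * (\<Sum>i=1..card {c \<in> ?S. c \<le> u}. x ^ (1 + i))"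
        by (simp only: sum_distrib_left[symmetric] sum_rank_above[OF fin, where f = "\<lambda>i. y ^ (i - 1)"]
            sum_rank_upto[OF fin, where f = "\<lambda>i. x ^ (1 + i)"])
      also have "\<dots> = a * (\<Sum>i<contact_gt P1 j. y ^ i) + b * (x ^ 2 * (\<Sum>i<contact_le P1 j. x ^ i))"
        unfolding contact_gt_def contact_le_def u_def
        by (simp add: sum.atLeast1_atMost_eq sum_distrib_left power2_eq_square mult.assoc)
      finally show ?thesis unfolding a_def b_def by (simp add: algebra_simps)
    qed
    then show ?thesis
      unfolding contrib_before_def contrib_after_def sum.distrib[symmetric] by (intro sum.cong) simp_all
  qed
  also have "(\<Sum>j=1..n2. \<Sum>k\<in>?S. x ^ card {c \<in> ?S. k \<le> c} * weight x y r s (P2, Q2) j)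
      = contrib_right x y r s P1 n2 (P2, Q2)"
    unfolding contrib_right_def sum_distrib_right[symmetric] sum_rank[OF fin]
    by (simp add: contact_def sum.atLeast1_atMost_eq sum_distrib_left sum_distrib_right mult_ac)
  finally show ?thesis .
qed

section \<open>The functional equation\<close>

definition J_coeff :: "'a::field \<Rightarrow> 'a \<Rightarrow> 'a \<Rightarrow> 'a \<Rightarrow> nat \<Rightarrow> 'a" where
  "J_coeff x y r s n = (\<Sum>pq\<in>intervals n. \<Sum>j=1..n. weight x y r s pq j)"

definition F_coeff :: "'a::field \<Rightarrow> nat \<Rightarrow> 'a" where
  "F_coeff x n = (\<Sum>pq\<in>intervals n. x ^ contact (fst pq))"

lemma fps_nth_Jgf: "fps_nth (Jgf x y r s) n = J_coeff x y r s n"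
  by (simp add: Jgf_def J_coeff_def weight_def case_prod_beta)

lemma fps_nth_Fgf: "fps_nth (Fgf x) n = F_coeff x n"
  by (simp add: Fgf_def F_coeff_def case_prod_beta)

lemma weight_first_up:
  assumes "pq \<in> intervals (Suc n)"
  shows "weight x y r s pq 1 = x * y ^ (contact (fst pq) - 1)"
proof -
  obtain P Q where pq: "pq = (P, Q)" by (cases pq)
  then have b: "balanced P" "balanced Q" "length P = 2 * Suc n" "P \<preceq> Q"
    using assms mem_intervals_iff by blast+
  then have "length Q = 2 * Suc n" using tamari_leq_length by metis
  then have "P \<noteq> []" "Q \<noteq> []" using b(3) by auto
  then show ?thesis using stats_first_up[OF b(1)] stats_first_up[OF b(2)] pq by (simp add: weight_def)
qed

lemma J_coeff_Suc:
  fixes x y r s :: "'a::field"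
  assumes "y \<noteq> 0"
  shows "J_coeff x y r s (Suc n) = x / y * F_coeff y (Suc n)
    + (\<Sum>n1\<le>n. \<Sum>pq1\<in>intervals n1. \<Sum>pq2\<in>intervals (n - n1).
        contrib_before x y r s n1 pq1 (fst pq2) + contrib_after x y r s n1 pq1 (fst pq2)
        + contrib_right x y r s (fst pq1) (n - n1) pq2)"
proof -
  have "J_coeff x y r s (Suc n) = (\<Sum>pq\<in>intervals (Suc n). weight x y r s pq 1)
      + (\<Sum>pq\<in>intervals (Suc n). \<Sum>j=2..Suc n. weight x y r s pq j)"
    unfolding J_coeff_def sum.distrib[symmetric]
    by (intro sum.cong refl) (simp add: sum.atLeast_Suc_atMost numeral_2_eq_2)
  also have "(\<Sum>pq\<in>intervals (Suc n). weight x y r s pq 1) = x / y * F_coeff y (Suc n)"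
  proof -
    have "weight x y r s pq 1 = x / y * y ^ contact (fst pq)" if "pq \<in> intervals (Suc n)" for pq
      using weight_first_up[OF that] contact_pos[of "fst pq"] assms
      by (cases "contact (fst pq)") (auto simp: field_simps)
    then show ?thesis unfolding F_coeff_def sum_distrib_left by (rule sum.cong[OF refl])
  qed
  also have "(\<Sum>pq\<in>intervals (Suc n). \<Sum>j=2..Suc n. weight x y r s pq j)
     = (\<Sum>n1\<le>n. \<Sum>pq1\<in>intervals n1. \<Sum>pq2\<in>intervals (n - n1). \<Sum>k\<in>contacts (fst pq1).
          \<Sum>j=2..Suc (n1 + (n - n1)). weight x y r s (glue pq1 k pq2) j)"
    by (subst sum_intervals_Suc) (intro sum.cong refl, simp)
  also have "\<dots> = (\<Sum>n1\<le>n. \<Sum>pq1\<in>intervals n1. \<Sum>pq2\<in>intervals (n - n1).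
        contrib_before x y r s n1 pq1 (fst pq2) + contrib_after x y r s n1 pq1 (fst pq2)
        + contrib_right x y r s (fst pq1) (n - n1) pq2)"
    by (intro sum.cong refl) (metis prod.collapse sum_glue_weights)
  finally show ?thesis .
qed

lemma sum_contrib_before:
  fixes x y r s :: "'a::field"
  assumes "y \<noteq> 1"
  shows "r * s * x / (y - 1) * (\<Sum>i\<le>n. (J_coeff 1 y r s i - J_coeff 1 1 r s i) * F_coeff y (n - i))
    = (\<Sum>n1\<le>n. \<Sum>pq1\<in>intervals n1. \<Sum>pq2\<in>intervals (n - n1). contrib_before x y r s n1 pq1 (fst pq2))"
proof -
  have "r * s * x / (y - 1) * (\<Sum>i\<le>n. (J_coeff 1 y r s i - J_coeff 1 1 r s i) * F_coeff y (n - i))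
     = (\<Sum>n1\<le>n. r * s * x / (y - 1) * ((\<Sum>pq1\<in>intervals n1. \<Sum>j\<in>{1..n1}.
          weight 1 y r s pq1 j - weight 1 1 r s pq1 j) * (\<Sum>pq2\<in>intervals (n - n1). y ^ contact (fst pq2))))"
    unfolding J_coeff_def F_coeff_def by (simp add: sum_distrib_left sum_subtractf)
  also have "\<dots> = (\<Sum>n1\<le>n. \<Sum>pq1\<in>intervals n1. \<Sum>pq2\<in>intervals (n - n1). contrib_before x y r s n1 pq1 (fst pq2))"
    unfolding scaled_sum_product_nested contrib_before_def
  proof (intro sum.cong refl)
    fix j :: nat and pq1 pq2 :: "bool list \<times> bool list"
    show "r * s * x / (y - 1) * (weight 1 y r s pq1 j - weight 1 1 r s pq1 j) * y ^ contact (fst pq2)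
      = weight 1 1 r s pq1 j * (r * s * x * y ^ contact (fst pq2) * (\<Sum>i<contact_gt (fst pq1) j. y ^ i))"
      using assms by (simp add: weight_def geometric_sum field_simps)
  qed
  finally show ?thesis .
qed

lemma sum_contrib_after:
  fixes x y r s :: "'a::field"
  assumes "x \<noteq> 1" "y \<noteq> 0"
  shows "s * x ^ 2 / ((x - 1) * y) * (\<Sum>i\<le>n. (J_coeff x y r s i - J_coeff 1 y r s i) * F_coeff y (n - i))
    = (\<Sum>n1\<le>n. \<Sum>pq1\<in>intervals n1. \<Sum>pq2\<in>intervals (n - n1). contrib_after x y r s n1 pq1 (fst pq2))"
proof -
  have "s * x ^ 2 / ((x - 1) * y) * (\<Sum>i\<le>n. (J_coeff x y r s i - J_coeff 1 y r s i) * F_coeff y (n - i))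
     = (\<Sum>n1\<le>n. s * x ^ 2 / ((x - 1) * y) * ((\<Sum>pq1\<in>intervals n1. \<Sum>j\<in>{1..n1}.
          weight x y r s pq1 j - weight 1 y r s pq1 j) * (\<Sum>pq2\<in>intervals (n - n1). y ^ contact (fst pq2))))"
    unfolding J_coeff_def F_coeff_def by (simp add: sum_distrib_left sum_subtractf)
  also have "\<dots> = (\<Sum>n1\<le>n. \<Sum>pq1\<in>intervals n1. \<Sum>pq2\<in>intervals (n - n1). contrib_after x y r s n1 pq1 (fst pq2))"
    unfolding scaled_sum_product_nested contrib_after_def
  proof (intro sum.cong refl)
    fix j :: nat and pq1 pq2 :: "bool list \<times> bool list"
    have c: "y ^ (contact_gt (fst pq1) j + contact (fst pq2) - 1)
        = y ^ contact_gt (fst pq1) j * y ^ contact (fst pq2) / y"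
      using contact_pos[of "fst pq2"] assms(2)
      by (cases "contact (fst pq2)") (auto simp: field_simps power_add)
    show "s * x ^ 2 / ((x - 1) * y) * (weight x y r s pq1 j - weight 1 y r s pq1 j) * y ^ contact (fst pq2)
      = weight 1 1 r s pq1 j * (s * x ^ 2 * (\<Sum>i<contact_le (fst pq1) j. x ^ i)
          * y ^ (contact_gt (fst pq1) j + contact (fst pq2) - 1))"
      unfolding c using assms by (simp add: weight_def geometric_sum field_simps)
  qed
  finally show ?thesis .
qed

lemma sum_contrib_right:
  fixes x y r s :: "'a::field"
  assumes "x \<noteq> 1"
  shows "x / (x - 1) * (\<Sum>i\<le>n. J_coeff x y r s i * (F_coeff x (n - i) - F_coeff 1 (n - i)))
    = (\<Sum>n1\<le>n. \<Sum>pq1\<in>intervals n1. \<Sum>pq2\<in>intervals (n - n1). contrib_right x y r s (fst pq1) (n - n1) pq2)"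
proof -
  have "x / (x - 1) * (\<Sum>i\<le>n. J_coeff x y r s i * (F_coeff x (n - i) - F_coeff 1 (n - i)))
     = x / (x - 1) * (\<Sum>n1\<le>n. J_coeff x y r s (n - n1) * (F_coeff x n1 - F_coeff 1 n1))"
    by (subst sum.atLeastAtMost_rev[of _ 0 n, simplified atLeast0AtMost]) simp
  also have "\<dots> = (\<Sum>n1\<le>n. x / (x - 1) * ((\<Sum>pq2\<in>intervals (n - n1). \<Sum>j\<in>{1..n - n1}.
      weight x y r s pq2 j) * (\<Sum>pq1\<in>intervals n1. x ^ contact (fst pq1) - 1)))"
    unfolding J_coeff_def F_coeff_def by (simp add: sum_distrib_left sum_subtractf)
  also have "\<dots> = (\<Sum>n1\<le>n. \<Sum>pq1\<in>intervals n1. \<Sum>pq2\<in>intervals (n - n1). contrib_right x y r s (fst pq1) (n - n1) pq2)"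
    unfolding scaled_sum_product_nested_swap contrib_right_def
  proof (intro sum.cong refl)
    fix j :: nat and pq1 pq2 :: "bool list \<times> bool list"
    show "x / (x - 1) * weight x y r s pq2 j * (x ^ contact (fst pq1) - 1)
       = weight x y r s pq2 j * x * (\<Sum>i<contact (fst pq1). x ^ i)"
      using assms by (simp add: geometric_sum field_simps)
  qed
  finally show ?thesis .
qed

lemma J_coeff_recurrence:
  fixes x y r s :: "'a::field"
  assumes "x \<noteq> 1" "y \<noteq> 1" "y \<noteq> 0"
  shows "J_coeff x y r s (Suc n) = x / y * F_coeff y (Suc n)
    + r * s * x / (y - 1) * (\<Sum>i\<le>n. (J_coeff 1 y r s i - J_coeff 1 1 r s i) * F_coeff y (n - i))
    + s * x ^ 2 / ((x - 1) * y) * (\<Sum>i\<le>n. (J_coeff x y r s i - J_coeff 1 y r s i) * F_coeff y (n - i))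
    + x / (x - 1) * (\<Sum>i\<le>n. J_coeff x y r s i * (F_coeff x (n - i) - F_coeff 1 (n - i)))"
  unfolding sum_contrib_before[OF assms(2)] sum_contrib_after[OF assms(1,3)] sum_contrib_right[OF assms(1)]
    J_coeff_Suc[OF assms(3)]
  by (simp add: sum.distrib add.assoc)

theorem proposition4p1:
  fixes x y r s :: real
  assumes "x \<noteq> 1" and "y \<noteq> 1" and "y \<noteq> 0"
  shows "Jgf x y r s =
      fps_const (x / y) * (Fgf y - fps_const y)
    + fps_const (r * s * x / (y - 1)) * fps_X * (Jgf 1 y r s - Jgf 1 1 r s) * Fgf y
    + fps_const (s * x ^ 2 / ((x - 1) * y)) * fps_X * (Jgf x y r s - Jgf 1 y r s) * Fgf y
    + fps_const (x / (x - 1)) * fps_X * Jgf x y r s * (Fgf x - Fgf 1)"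
proof (rule fps_ext)
  fix n
  show "fps_nth (Jgf x y r s) n = fps_nth (fps_const (x / y) * (Fgf y - fps_const y)
    + fps_const (r * s * x / (y - 1)) * fps_X * (Jgf 1 y r s - Jgf 1 1 r s) * Fgf y
    + fps_const (s * x ^ 2 / ((x - 1) * y)) * fps_X * (Jgf x y r s - Jgf 1 y r s) * Fgf y
    + fps_const (x / (x - 1)) * fps_X * Jgf x y r s * (Fgf x - Fgf 1)) n"
  proof (cases n)
    case 0
    have "F_coeff y 0 = y" by (simp add: F_coeff_def intervals_0 contact_eq_length contact_list_def)
    then show ?thesis by (simp add: 0 fps_nth_const_X_mult fps_nth_Jgf fps_nth_Fgf J_coeff_def)
  next
    case (Suc m)
    then show ?thesis
      using J_coeff_recurrence[OF assms, of r s m]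
      by (simp add: fps_nth_const_X_mult fps_nth_Jgf fps_nth_Fgf)
  qed
qed

end
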